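(* Suppose $G$ is a topological graph whose edge relation is transitive and such that, for the quotient map $\pi\colon V(G)\to |G|$, we have $\operatorname{card}(\pi^{-1}(x))\le 2$ for every $x\in|G|$. Then $\dim|G|\le 1$.
   Context: A topological graph is a pair $G=(V(G),E(G))$ where $V(G)$ is a compact, second countable, zero-dimensional space and $E(G)\subseteq V(G)^2$ is a closed, reflexive and symmetric relation. If $E(G)$ is also transitive (so an equivalence relation), the topological realization $|G|$ is the quotient space $V(G)/E(G)$, and $\pi$ denotes the quotient map. $\dim$ is covering dimension. *)

theory Defs
  imports "HOL-Analysis.Analysis"
begin

definition quotient_topology :: "'a topology \<Rightarrow> ('a \<Rightarrow> 'b) \<Rightarrow> 'b topology" where
  "quotient_topology X f =
     topology (\<lambda>U. U \<subseteq> f ` topspace X \<and> openin X {x \<in> topspace X. f x \<in> U})"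

definition rel_class :: "('a \<times> 'a) set \<Rightarrow> 'a \<Rightarrow> 'a set" where
  "rel_class E x = E `` {x}"

text \<open>Topological graph: V(G) is the space X (compact, second countable,
  zero-dimensional), E(G) = E is a closed, reflexive, symmetric relation on it.\<close>
definition topological_graph :: "'a topology \<Rightarrow> ('a \<times> 'a) set \<Rightarrow> bool" where
  "topological_graph X E \<longleftrightarrow>
     compact_space X \<and> second_countable X \<and> X dim_le 0 \<and>
     E \<subseteq> topspace X \<times> topspace X \<and>
     closedin (prod_topology X X) E \<and>
     (\<forall>x \<in> topspace X. (x, x) \<in> E) \<and> sym E"

text \<open>Topological realization |G| = V(G)/E(G) (for transitive E).\<close>
definition realization :: "'a topology \<Rightarrow> ('a \<times> 'a) set \<Rightarrow> 'a set topology" where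
  "realization X E = quotient_topology X (rel_class E)"

definition covering_dim_le :: "'a topology \<Rightarrow> int \<Rightarrow> bool" where
  "covering_dim_le X n \<longleftrightarrow>
     (\<forall>\<U>. finite \<U> \<and> (\<forall>U \<in> \<U>. openin X U) \<and> \<Union>\<U> = topspace X \<longrightarrow>
        (\<exists>\<V>. finite \<V> \<and> (\<forall>V \<in> \<V>. openin X V) \<and> \<Union>\<V> = topspace X \<and>
              (\<forall>V \<in> \<V>. \<exists>U \<in> \<U>. V \<subseteq> U) \<and>
              (\<forall>x \<in> topspace X. int (card {V \<in> \<V>. x \<in> V}) \<le> n + 1)))"

end

theory Submission
  imports Defs
begin

text \<open>Pull a finite open cover of |G| back to V(G) and refine it by a finite partition of V(G)
  into clopen sets C j. The points outside C j that are equivalent to a point of C j form closed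
  sets A j, and since classes have at most two points these are pairwise disjoint.
  Zero-dimensionality and compactness give pairwise disjoint clopen sets B j containing A j inside
  the corresponding cover members. The largest saturated subsets of the open sets C j \<union> B j are
  open (E is closed and V(G) compact), they cover V(G) because each C j \<union> A j is saturated,
  and a point lies in at most two of them (one C j and one B j); their images form a refinement
  of order 2 in |G|.\<close>

lemma openin_quotient_topology:
  "openin (quotient_topology X f) U \<longleftrightarrow>
     U \<subseteq> f ` topspace X \<and> openin X {x \<in> topspace X. f x \<in> U}"
proof -
  let ?L = "\<lambda>U. U \<subseteq> f ` topspace X \<and> openin X {x \<in> topspace X. f x \<in> U}"
  have "?L (S \<inter> T)" if "?L S" "?L T" for S T
  proof -
    have "{x \<in> topspace X. f x \<in> S \<inter> T} =
          {x \<in> topspace X. f x \<in> S} \<inter> {x \<in> topspace X. f x \<in> T}"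
      by auto
    with that show ?thesis by auto
  qed
  moreover have "?L (\<Union>K)" if "\<forall>S\<in>K. ?L S" for K
  proof -
    have "{x \<in> topspace X. f x \<in> \<Union>K} = (\<Union>S\<in>K. {x \<in> topspace X. f x \<in> S})"
      by auto
    with that show ?thesis by auto
  qed
  ultimately have "istopology ?L"
    unfolding istopology_def by blast
  then show ?thesis
    unfolding quotient_topology_def by simp
qed

lemma topspace_quotient_topology: "topspace (quotient_topology X f) = f ` topspace X"
proof
  show "topspace (quotient_topology X f) \<subseteq> f ` topspace X"
    using openin_quotient_topology[of X f "topspace (quotient_topology X f)"] by simp
  have "{x \<in> topspace X. f x \<in> f ` topspace X} = topspace X"
    by auto
  then have "openin (quotient_topology X f) (f ` topspace X)"
    by (simp add: openin_quotient_topology)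
  then show "f ` topspace X \<subseteq> topspace (quotient_topology X f)"
    by (rule openin_subset)
qed

definition saturated :: "'a topology \<Rightarrow> ('a \<Rightarrow> 'b) \<Rightarrow> 'a set \<Rightarrow> bool" where
  "saturated X f S \<longleftrightarrow> S = {x \<in> topspace X. f x \<in> f ` S}"

lemma saturated_preimage: "saturated X f {x \<in> topspace X. f x \<in> U}"
  unfolding saturated_def by auto

lemma openin_quotient_topology_image:
  assumes "openin X V" "saturated X f V"
  shows "openin (quotient_topology X f) (f ` V)"
proof -
  have "V \<subseteq> topspace X"
    using assms(1) by (rule openin_subset)
  with assms show ?thesis
    unfolding saturated_def openin_quotient_topology by auto
qed

lemma saturated_image_mem_iff:
  assumes "saturated X f V" "x \<in> topspace X"
  shows "f x \<in> f ` V \<longleftrightarrow> x \<in> V"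
  using assms unfolding saturated_def by blast

lemma card_members_image_le:
  assumes "finite I"
  shows "card {A \<in> F ` I. x \<in> A} \<le> card {i \<in> I. x \<in> F i}"
proof -
  have "{A \<in> F ` I. x \<in> A} = F ` {i \<in> I. x \<in> F i}"
    by auto
  then show ?thesis
    using assms by (simp add: card_image_le)
qed

lemma covering_dim_le_quotient_topologyI:
  assumes refine: "\<And>\<W>. finite \<W> \<Longrightarrow> \<forall>W\<in>\<W>. openin X W \<and> saturated X f W \<Longrightarrow>
      \<Union>\<W> = topspace X \<Longrightarrow>
      \<exists>\<V>. finite \<V> \<and> (\<forall>V\<in>\<V>. openin X V \<and> saturated X f V) \<and> \<Union>\<V> = topspace X \<and>
           (\<forall>V\<in>\<V>. \<exists>W\<in>\<W>. V \<subseteq> W) \<and>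
           (\<forall>x\<in>topspace X. int (card {V \<in> \<V>. x \<in> V}) \<le> n + 1)"
  shows "covering_dim_le (quotient_topology X f) n"
  unfolding covering_dim_le_def
proof (intro allI impI)
  let ?Y = "quotient_topology X f"
  let ?pre = "\<lambda>U. {x \<in> topspace X. f x \<in> U}"
  fix \<U> assume \<U>: "finite \<U> \<and> (\<forall>U\<in>\<U>. openin ?Y U) \<and> \<Union>\<U> = topspace ?Y"
  then have pre: "finite (?pre ` \<U>)" "\<forall>W\<in>?pre ` \<U>. openin X W \<and> saturated X f W"
      "\<Union>(?pre ` \<U>) = topspace X"
    by (auto simp: openin_quotient_topology topspace_quotient_topology saturated_preimage)
  obtain \<V> where \<V>: "finite \<V>" "\<forall>V\<in>\<V>. openin X V \<and> saturated X f V"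
      "\<Union>\<V> = topspace X" "\<forall>V\<in>\<V>. \<exists>W\<in>?pre ` \<U>. V \<subseteq> W"
      "\<forall>x\<in>topspace X. int (card {V \<in> \<V>. x \<in> V}) \<le> n + 1"
    using refine[OF pre] by (elim exE conjE)
  show "\<exists>\<V>'. finite \<V>' \<and> (\<forall>V\<in>\<V>'. openin ?Y V) \<and> \<Union>\<V>' = topspace ?Y \<and>
          (\<forall>V\<in>\<V>'. \<exists>U\<in>\<U>. V \<subseteq> U) \<and> (\<forall>y\<in>topspace ?Y. int (card {V \<in> \<V>'. y \<in> V}) \<le> n + 1)"
  proof (intro exI[of _ "(`) f ` \<V>"] conjI ballI)
    show "finite ((`) f ` \<V>)"
      using \<V>(1) by simp
    show "openin ?Y V'" if "V' \<in> (`) f ` \<V>" for V'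
      using that \<V>(2) openin_quotient_topology_image by blast
    show "\<Union>((`) f ` \<V>) = topspace ?Y"
      using \<V>(3) by (auto simp: topspace_quotient_topology)
  next
    fix V' assume "V' \<in> (`) f ` \<V>"
    then obtain V where "V \<in> \<V>" "V' = f ` V"
      by blast
    then obtain U where "U \<in> \<U>" "V \<subseteq> ?pre U"
      using \<V>(4) by blast
    with \<open>V' = f ` V\<close> show "\<exists>U\<in>\<U>. V' \<subseteq> U"
      by auto
  next
    fix y assume "y \<in> topspace ?Y"
    then obtain x where x: "x \<in> topspace X" "y = f x"
      by (auto simp: topspace_quotient_topology)
    have "card {V' \<in> (`) f ` \<V>. y \<in> V'} \<le> card {V \<in> \<V>. f x \<in> f ` V}"
      unfolding x(2) using \<V>(1) by (rule card_members_image_le)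
    also have "{V \<in> \<V>. f x \<in> f ` V} = {V \<in> \<V>. x \<in> V}"
      using \<V>(2) saturated_image_mem_iff[OF _ x(1)] by (intro Collect_cong) blast
    finally show "int (card {V' \<in> (`) f ` \<V>. y \<in> V'}) \<le> n + 1"
      using \<V>(5) x(1) by (meson of_nat_mono order_trans)
  qed
qed

lemma compactin_finite_clopen_refinement:
  assumes "X dim_le 0" "compactin X K" "\<forall>W\<in>\<W>. openin X W" "K \<subseteq> \<Union>\<W>"
  obtains \<D> where "finite \<D>" "\<forall>D\<in>\<D>. closedin X D \<and> openin X D \<and> (\<exists>W\<in>\<W>. D \<subseteq> W)"
    "K \<subseteq> \<Union>\<D>"
proof -
  let ?O = "{D. closedin X D \<and> openin X D \<and> (\<exists>W\<in>\<W>. D \<subseteq> W)}"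
  have clopen_base: "neighbourhood_base_of (\<lambda>D. closedin X D \<and> openin X D) X"
    using assms(1) dimension_le_0_neighbourhood_base_of_clopen by blast
  have "K \<subseteq> \<Union>?O"
  proof
    fix x assume "x \<in> K"
    then obtain W where W: "W \<in> \<W>" "x \<in> W"
      using assms(4) by blast
    then obtain U D where "openin X U" "closedin X D \<and> openin X D" "x \<in> U" "U \<subseteq> D" "D \<subseteq> W"
      using clopen_base assms(3) unfolding neighbourhood_base_of by meson
    with W show "x \<in> \<Union>?O" by blast
  qed
  then have "\<exists>\<D>. finite \<D> \<and> \<D> \<subseteq> ?O \<and> K \<subseteq> \<Union>\<D>"
    using assms(2)[unfolded compactin_def, THEN conjunct2, rule_format, of ?O] by blast
  then show ?thesis
    using that by blast
qed

lemma clopen_between_closed_open: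
  assumes "X dim_le 0" "compact_space X" "closedin X A" "openin X U" "A \<subseteq> U"
  obtains B where "closedin X B" "openin X B" "A \<subseteq> B" "B \<subseteq> U"
proof -
  have "compactin X A"
    using assms closedin_compact_space by blast
  moreover have "\<forall>W\<in>{U}. openin X W" "A \<subseteq> \<Union>{U}"
    using assms by auto
  ultimately obtain \<D> where \<D>: "finite \<D>"
      "\<forall>D\<in>\<D>. closedin X D \<and> openin X D \<and> (\<exists>W\<in>{U}. D \<subseteq> W)" "A \<subseteq> \<Union>\<D>"
    by (rule compactin_finite_clopen_refinement[OF assms(1)])
  then have "closedin X (\<Union>\<D>)" "openin X (\<Union>\<D>)"
    by (auto intro: closedin_Union openin_Union)
  with \<D> show ?thesis
    using that by blast
qed

lemma clopen_disjointed:
  assumes "\<And>i. closedin X (A i) \<and> openin X (A i)"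
  shows "closedin X (disjointed A n) \<and> openin X (disjointed A n)"
proof -
  have "closedin X (\<Union>i\<in>{0..<n}. A i)" "openin X (\<Union>i\<in>{0..<n}. A i)"
    using assms by (auto intro: closedin_Union openin_Union)
  with assms[of n] show ?thesis
    unfolding disjointed_def by (simp add: closedin_diff openin_diff)
qed

lemma clopen_partition_refining_open_cover:
  assumes "X dim_le 0" "compact_space X" "\<forall>W\<in>\<W>. openin X W" "topspace X \<subseteq> \<Union>\<W>"
  obtains m :: nat and C
  where "\<forall>j<m. closedin X (C j) \<and> openin X (C j) \<and> (\<exists>W\<in>\<W>. C j \<subseteq> W)"
    "(\<Union>j<m. C j) = topspace X" "disjoint_family C"
proof -
  have "compactin X (topspace X)"
    using assms(2) compact_space_def by blast
  then obtain \<D> where \<D>: "finite \<D>"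
      "\<forall>D\<in>\<D>. closedin X D \<and> openin X D \<and> (\<exists>W\<in>\<W>. D \<subseteq> W)" "topspace X \<subseteq> \<Union>\<D>"
    using assms(3,4) by (rule compactin_finite_clopen_refinement[OF assms(1)])
  obtain h where h: "bij_betw h {..<card \<D>} \<D>"
    using ex_bij_betw_nat_finite[OF \<D>(1)] lessThan_atLeast0 by metis
  define D where "D j = (if j < card \<D> then h j else {})" for j
  have D_mem: "D j \<in> \<D>" if "j < card \<D>" for j
    using h that unfolding D_def bij_betw_def by auto
  have D_clopen: "closedin X (D j) \<and> openin X (D j)" for j
    using \<D>(2) D_mem by (cases "j < card \<D>") (auto simp: D_def)
  have "(\<Union>j<card \<D>. disjointed D j) = (\<Union>j<card \<D>. D j)"
    by (simp add: finite_UN_disjointed_eq lessThan_atLeast0)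
  also have "\<dots> = \<Union>\<D>"
    using bij_betw_imp_surj_on[OF h] by (simp add: D_def)
  also have "\<dots> = topspace X"
    using \<D>(2,3) by (auto dest: openin_subset)
  finally have "(\<Union>j<card \<D>. disjointed D j) = topspace X" .
  moreover have "\<exists>W\<in>\<W>. disjointed D j \<subseteq> W" if "j < card \<D>" for j
    using \<D>(2) D_mem[OF that] disjointed_subset[of D j] by (meson subset_trans)
  ultimately show ?thesis
    using clopen_disjointed[OF D_clopen]
    by (intro that[of "card \<D>" "disjointed D"] disjoint_family_disjointed) auto
qed

lemma clopen_separation_of_disjoint_closed:
  fixes m :: nat
  assumes "X dim_le 0" "compact_space X"
    and "\<forall>j<m. closedin X (A j) \<and> openin X (U j) \<and> A j \<subseteq> U j"
    and "disjoint_family_on A {..<m}"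
  obtains B where "\<forall>j<m. closedin X (B j) \<and> openin X (B j) \<and> A j \<subseteq> B j \<and> B j \<subseteq> U j"
    "disjoint_family B"
proof -
  define U' where "U' j = U j - (\<Union>l\<in>{..<m} - {j}. A l)" for j
  have "\<exists>B. j < m \<longrightarrow> closedin X B \<and> openin X B \<and> A j \<subseteq> B \<and> B \<subseteq> U' j" for j
  proof (cases "j < m")
    case True
    have "closedin X (\<Union>l\<in>{..<m} - {j}. A l)"
      using assms(3) by (intro closedin_Union) auto
    with True assms(3) have "openin X (U' j)"
      unfolding U'_def by (simp add: openin_diff)
    moreover have "A j \<subseteq> U' j"
      using True assms(3,4) unfolding U'_def disjoint_family_on_def by blast
    ultimately show ?thesis
      using clopen_between_closed_open[OF assms(1,2)] True assms(3) by metis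
  qed simp
  then obtain B' where B': "\<And>j. j < m \<Longrightarrow> closedin X (B' j) \<and> openin X (B' j) \<and>
      A j \<subseteq> B' j \<and> B' j \<subseteq> U' j"
    by metis
  define B where "B = disjointed (\<lambda>j. if j < m then B' j else {})"
  have "closedin X (B j) \<and> openin X (B j)" for j
    unfolding B_def using B' by (intro clopen_disjointed) auto
  moreover have "B j \<subseteq> U j" if "j < m" for j
    using disjointed_subset B' that unfolding B_def U'_def by fastforce
  moreover have "A j \<subseteq> B j" if "j < m" for j
  proof -
    have "x \<notin> B' l" if "x \<in> A j" "l < j" for x l
      using B'[of l] \<open>j < m\<close> that unfolding U'_def by auto
    with B' \<open>j < m\<close> show ?thesis
      unfolding B_def disjointed_def by auto
  qed
  moreover have "disjoint_family B"
    unfolding B_def by (rule disjoint_family_disjointed)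
  ultimately show ?thesis
    by (intro that[of B]) auto
qed

lemma closedin_Image_closed_relation:
  assumes "compact_space X" "closedin (prod_topology X X) E" "closedin X K"
  shows "closedin X (E `` K)"
proof -
  have "E \<subseteq> topspace X \<times> topspace X"
    using closedin_subset[OF assms(2)] by simp
  then have "E `` K = snd ` (E \<inter> (K \<times> topspace X))"
    by force
  moreover have "closedin (prod_topology X X) (E \<inter> (K \<times> topspace X))"
    using assms(2,3) by (simp add: closedin_Int closedin_prod_Times_iff)
  ultimately show ?thesis
    using closed_map_snd[OF assms(1)] unfolding closed_map_def by metis
qed

lemma openin_rel_class_subset:
  assumes "compact_space X" "closedin (prod_topology X X) E" "sym E" "openin X S"
  shows "openin X {x \<in> topspace X. E `` {x} \<subseteq> S}"
proof -
  have "{x \<in> topspace X. E `` {x} \<subseteq> S} = topspace X - E `` (topspace X - S)"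
    using closedin_subset[OF assms(2)] assms(3) unfolding sym_def by auto
  moreover have "closedin X (E `` (topspace X - S))"
    using assms by (intro closedin_Image_closed_relation) auto
  ultimately show ?thesis
    by (simp add: openin_diff)
qed

text \<open>A point outside C i and C j that is equivalent to points of both lies in a class with
  three elements.\<close>

lemma disjoint_family_on_Image_diff:
  assumes "equiv S E" "\<forall>x\<in>S. finite (E `` {x}) \<and> card (E `` {x}) \<le> 2"
    and "disjoint_family_on C I"
  shows "disjoint_family_on (\<lambda>j. E `` C j - C j) I"
  unfolding disjoint_family_on_def
proof (intro ballI impI equals0I)
  fix i j x assume "i \<in> I" "j \<in> I" "i \<noteq> j" "x \<in> (E `` C i - C i) \<inter> (E `` C j - C j)"
  then obtain a b where "a \<in> C i" "b \<in> C j" "(a, x) \<in> E" "(b, x) \<in> E" "x \<notin> C i" "x \<notin> C j"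
    by blast
  moreover have "a \<noteq> b"
    using assms(3) \<open>i \<in> I\<close> \<open>j \<in> I\<close> \<open>i \<noteq> j\<close> \<open>a \<in> C i\<close> \<open>b \<in> C j\<close>
    unfolding disjoint_family_on_def by blast
  moreover have "x \<in> S" "{x, a, b} \<subseteq> E `` {x}"
    using assms(1) \<open>(a, x) \<in> E\<close> \<open>(b, x) \<in> E\<close>
    unfolding equiv_def refl_on_def sym_def by blast+
  moreover have "x \<noteq> a" "x \<noteq> b"
    using \<open>a \<in> C i\<close> \<open>x \<notin> C i\<close> \<open>b \<in> C j\<close> \<open>x \<notin> C j\<close> by auto
  ultimately have "card {x, a, b} = 3" "card {x, a, b} \<le> card (E `` {x})"
    "card (E `` {x}) \<le> 2"
    using assms(2) card_mono[of "E `` {x}" "{x, a, b}"] by auto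
  then show False
    by simp
qed

lemma card_indices_containing_le_1:
  assumes "disjoint_family_on C I"
  shows "card {j \<in> I. x \<in> C j} \<le> 1"
proof (cases "\<exists>i\<in>I. x \<in> C i")
  case True
  then obtain i where "i \<in> I" "x \<in> C i" by blast
  with assms have "{j \<in> I. x \<in> C j} \<subseteq> {i}"
    by (auto simp: disjoint_family_on_def)
  then show ?thesis
    using card_mono[of "{i}"] by simp
next
  case False
  then have "{j \<in> I. x \<in> C j} = {}"
    by blast
  then show ?thesis
    by (simp only: card.empty)
qed

lemma card_indices_Un_disjoint_families_le_2:
  assumes "disjoint_family_on C I" "disjoint_family_on B I"
  shows "card {j \<in> I. x \<in> C j \<union> B j} \<le> 2"
proof -
  have "{j \<in> I. x \<in> C j \<union> B j} = {j \<in> I. x \<in> C j} \<union> {j \<in> I. x \<in> B j}"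
    by auto
  then show ?thesis
    using card_Un_le[of "{j \<in> I. x \<in> C j}" "{j \<in> I. x \<in> B j}"]
      card_indices_containing_le_1[OF assms(1), of x] card_indices_containing_le_1[OF assms(2), of x]
    by simp
qed

lemma saturated_rel_class_kernel:
  "saturated X (rel_class E) {x \<in> topspace X. E `` {x} \<subseteq> S}"
  unfolding saturated_def rel_class_def by auto

lemma saturated_rel_class_Image_subset:
  assumes "equiv (topspace X) E" "saturated X (rel_class E) W" "C \<subseteq> W"
  shows "E `` C \<subseteq> W"
proof
  fix y assume "y \<in> E `` C"
  then obtain c where "c \<in> C" "(c, y) \<in> E"
    by blast
  then have "y \<in> topspace X" "rel_class E y = rel_class E c"
    using equiv_class_eq_iff[OF assms(1), of c y] unfolding rel_class_def by auto
  with \<open>c \<in> C\<close> assms(2,3) show "y \<in> W"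
    unfolding saturated_def by blast
qed

lemma open_nbhds_of_saturations_order_le_2:
  fixes m :: nat
  assumes "compact_space X" "X dim_le 0" "closedin (prod_topology X X) E" "equiv (topspace X) E"
    and "\<forall>x\<in>topspace X. finite (E `` {x}) \<and> card (E `` {x}) \<le> 2"
    and C: "\<forall>j<m. closedin X (C j) \<and> openin X (C j) \<and> openin X (W j) \<and> E `` C j \<subseteq> W j"
    and "disjoint_family_on C {..<m}"
  obtains S where "\<forall>j<m. openin X (S j) \<and> E `` C j \<subseteq> S j \<and> S j \<subseteq> W j"
    "\<forall>x. card {j \<in> {..<m}. x \<in> S j} \<le> 2"
proof -
  define A where "A j = E `` C j - C j" for j
  have "\<forall>j<m. closedin X (A j) \<and> openin X (W j) \<and> A j \<subseteq> W j"
    using C closedin_Image_closed_relation[OF assms(1,3)] unfolding A_def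
    by (auto simp: closedin_diff)
  moreover have "disjoint_family_on A {..<m}"
    unfolding A_def using assms(4,5,7) by (rule disjoint_family_on_Image_diff)
  ultimately obtain B where B: "\<forall>j<m. closedin X (B j) \<and> openin X (B j) \<and> A j \<subseteq> B j \<and> B j \<subseteq> W j"
      "disjoint_family B"
    by (rule clopen_separation_of_disjoint_closed[OF assms(2,1)])
  have C_sub: "C j \<subseteq> E `` C j" if "j < m" for j
  proof
    fix x assume "x \<in> C j"
    moreover have "C j \<subseteq> topspace X"
      using C that by (simp add: closedin_subset)
    ultimately show "x \<in> E `` C j"
      using assms(4) unfolding equiv_def refl_on_def by blast
  qed
  have "disjoint_family_on B {..<m}"
    using B(2) disjoint_family_on_mono by blast
  have "\<forall>j<m. openin X (C j \<union> B j) \<and> E `` C j \<subseteq> C j \<union> B j \<and> C j \<union> B j \<subseteq> W j"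
    using B C C_sub unfolding A_def by (simp add: openin_Un) blast
  moreover have "\<forall>x. card {j \<in> {..<m}. x \<in> C j \<union> B j} \<le> 2"
    using assms(7) \<open>disjoint_family_on B {..<m}\<close>
    by (intro allI card_indices_Un_disjoint_families_le_2)
  ultimately show ?thesis
    by (rule that)
qed

lemma rel_class_fibre:
  assumes "equiv (topspace X) E" "x \<in> topspace X"
  shows "{v \<in> topspace X. rel_class E v = rel_class E x} = E `` {x}"
  using equiv_class_eq_iff[OF assms(1)] assms(2) unfolding rel_class_def by blast

lemma saturated_open_refinement_order_le_2:
  assumes "compact_space X" "X dim_le 0" "closedin (prod_topology X X) E" "equiv (topspace X) E"
    and "\<forall>x\<in>topspace X. finite (E `` {x}) \<and> card (E `` {x}) \<le> 2"
    and \<W>: "\<forall>W\<in>\<W>. openin X W \<and> saturated X (rel_class E) W" "\<Union>\<W> = topspace X"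
  obtains \<V> where "finite \<V>" "\<forall>V\<in>\<V>. openin X V \<and> saturated X (rel_class E) V"
    "\<Union>\<V> = topspace X" "\<forall>V\<in>\<V>. \<exists>W\<in>\<W>. V \<subseteq> W"
    "\<forall>x\<in>topspace X. card {V \<in> \<V>. x \<in> V} \<le> 2"
proof -
  have "\<forall>W\<in>\<W>. openin X W" "topspace X \<subseteq> \<Union>\<W>"
    using \<W> by auto
  then obtain m :: nat and C
    where C: "\<forall>j<m. closedin X (C j) \<and> openin X (C j) \<and> (\<exists>W\<in>\<W>. C j \<subseteq> W)"
      "(\<Union>j<m. C j) = topspace X" "disjoint_family C"
    by (rule clopen_partition_refining_open_cover[OF assms(2,1)])
  then obtain W where W: "\<forall>j<m. W j \<in> \<W> \<and> C j \<subseteq> W j"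
    by metis
  have "\<forall>j<m. closedin X (C j) \<and> openin X (C j) \<and> openin X (W j) \<and> E `` C j \<subseteq> W j"
    using C(1) W \<W>(1) saturated_rel_class_Image_subset[OF assms(4)] by blast
  moreover have "disjoint_family_on C {..<m}"
    using C(3) disjoint_family_on_mono by blast
  ultimately obtain S where S: "\<forall>j<m. openin X (S j) \<and> E `` C j \<subseteq> S j \<and> S j \<subseteq> W j"
      "\<forall>x. card {j \<in> {..<m}. x \<in> S j} \<le> 2"
    by (rule open_nbhds_of_saturations_order_le_2[OF assms(1-5)])
  have "sym E"
    using assms(4) by (simp add: equiv_def)
  define V where "V j = {x \<in> topspace X. E `` {x} \<subseteq> S j}" for j
  have V_S: "V j \<subseteq> S j" for j
    using assms(4) unfolding V_def equiv_def refl_on_def by blast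
  show ?thesis
  proof (rule that[of "V ` {..<m}"])
    show "finite (V ` {..<m})"
      by simp
    show "\<forall>V'\<in>V ` {..<m}. openin X V' \<and> saturated X (rel_class E) V'"
      using S(1) openin_rel_class_subset[OF assms(1,3) \<open>sym E\<close>] saturated_rel_class_kernel
      unfolding V_def by auto
    have "x \<in> V k" if "x \<in> C k" "k < m" for x k
    proof -
      have "E `` {x} \<subseteq> E `` C k"
        using that(1) by blast
      also have "\<dots> \<subseteq> S k"
        using S(1) that(2) by blast
      finally show ?thesis
        using C(2) that unfolding V_def by blast
    qed
    then have "topspace X \<subseteq> \<Union>(V ` {..<m})"
      using C(2) by blast
    moreover have "\<Union>(V ` {..<m}) \<subseteq> topspace X"
      unfolding V_def by auto
    ultimately show "\<Union>(V ` {..<m}) = topspace X"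
      by (rule equalityI[rotated])
    show "\<forall>V'\<in>V ` {..<m}. \<exists>W\<in>\<W>. V' \<subseteq> W"
    proof
      fix V' assume "V' \<in> V ` {..<m}"
      then obtain j where "j < m" "V' = V j"
        by blast
      then have "V' \<subseteq> W j" "W j \<in> \<W>"
        using V_S[of j] S(1) W by blast+
      then show "\<exists>W\<in>\<W>. V' \<subseteq> W"
        by blast
    qed
    show "\<forall>x\<in>topspace X. card {V' \<in> V ` {..<m}. x \<in> V'} \<le> 2"
    proof
      fix x
      have "card {V' \<in> V ` {..<m}. x \<in> V'} \<le> card {j \<in> {..<m}. x \<in> V j}"
        by (rule card_members_image_le) simp
      also have "\<dots> \<le> card {j \<in> {..<m}. x \<in> S j}"
        using V_S by (intro card_mono) auto
      also have "\<dots> \<le> 2"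
        using S(2) by blast
      finally show "card {V' \<in> V ` {..<m}. x \<in> V'} \<le> 2" .
    qed
  qed
qed

theorem mainTheorem4:
  fixes X :: "'a topology" and E :: "('a \<times> 'a) set"
  assumes "topological_graph X E"
    and "trans E"
    and "\<forall>y \<in> topspace (realization X E).
           finite {v \<in> topspace X. rel_class E v = y} \<and>
           card {v \<in> topspace X. rel_class E v = y} \<le> 2"
  shows "covering_dim_le (realization X E) 1"
proof -
  have X: "compact_space X" "X dim_le 0" "closedin (prod_topology X X) E"
    using assms(1) unfolding topological_graph_def by auto
  have E: "equiv (topspace X) E"
    using assms(1,2) unfolding topological_graph_def equiv_def refl_on_def by auto
  have classes: "\<forall>x\<in>topspace X. finite (E `` {x}) \<and> card (E `` {x}) \<le> 2"
    using assms(3) rel_class_fibre[OF E]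
    by (auto simp: realization_def topspace_quotient_topology)
  show ?thesis
    unfolding realization_def
  proof (rule covering_dim_le_quotient_topologyI)
    fix \<W> assume "\<forall>W\<in>\<W>. openin X W \<and> saturated X (rel_class E) W" "\<Union>\<W> = topspace X"
    then obtain \<V> where "finite \<V>" "\<forall>V\<in>\<V>. openin X V \<and> saturated X (rel_class E) V"
      "\<Union>\<V> = topspace X" "\<forall>V\<in>\<V>. \<exists>W\<in>\<W>. V \<subseteq> W"
      "\<forall>x\<in>topspace X. card {V \<in> \<V>. x \<in> V} \<le> 2"
      by (rule saturated_open_refinement_order_le_2[OF X E classes])
    then show "\<exists>\<V>. finite \<V> \<and> (\<forall>V\<in>\<V>. openin X V \<and> saturated X (rel_class E) V) \<and>
        \<Union>\<V> = topspace X \<and> (\<forall>V\<in>\<V>. \<exists>W\<in>\<W>. V \<subseteq> W) \<and>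
        (\<forall>x\<in>topspace X. int (card {V \<in> \<V>. x \<in> V}) \<le> 1 + 1)"
      by (intro exI[of _ \<V>]) auto
  qed
qed

end
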